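(* Suppose $X_1,\ldots,X_{2n}$ are i.i.d. $N(\theta^*,\sigma^2)$ with $\sigma^2>0$, and use the squared-error loss $\ell(\theta;x)=(\theta-x)^2$ on $\Theta=\mathbb{R}$. Consider the offline GUe-value $G_S(\theta)=\exp[-\omega n\{\widehat R_{S_2}(\widehat\theta)-\widehat R_{S_2}(\theta)\}]$ with $S_2=\{X_1,\ldots,X_n\}$, $S_1=\{X_{n+1},\ldots,X_{2n}\}$, $\widehat\theta$ the sample mean of $S_1$, $\widehat R_{S_2}(\theta)=n^{-1}\sum_{i=1}^n(\theta-X_i)^2$, and learning rate $\omega>0$. Define $$b^{(\omega)}_{\alpha,\sigma^2}(z)=\frac{\log(1/\alpha)}{2\omega\sigma^2 z}+\frac z2.$$ Then the learning rate $\omega$ for which the confidence set $\{\theta:G_S(\theta)<1/\alpha\}$ has exactly $(1-\alpha)$-level coverage of $\theta^*$ (equivalently $\Pr\{G_S(\theta^* )\ge1/\alpha\}=\alpha$) is given by the solution to $$\int_0^\infty\int_{b^{(\omega)}_{\alpha,\sigma^2}(z_2)}^\infty\frac{e^{-(z_1^2+z_2^2)/2}}{2\pi}\,dz_1\,dz_2+\int_{-\infty}^0\int_{-\infty}^{b^{(\omega)}_{\alpha,\sigma^2}(z_2)}\frac{e^{-(z_1^2+z_2^2)/2}}{2\pi}\,dz_1\,dz_2=\alpha.$$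
   Context: Here $\alpha\in(0,1)$ is a fixed significance level. The offline GUe-value is the quantity $\exp[-\omega n_2\{\widehat R_{S_2}(\widehat\theta_{S_1})-\widehat R_{S_2}(\theta)\}]$ built from a split of the sample into $S_1$ (used to compute the empirical risk minimizer $\widehat\theta_{S_1}$) and $S_2$ (of size $n_2$, used to evaluate the empirical risk), here with $n_2=n$. *)

theory Defs
  imports "HOL-Probability.Probability"
begin

text \<open>Sample x_1,...,x_{2n} given as a function x :: nat => real (indices 1..2n).
  S_2 = {x_1..x_n}, S_1 = {x_{n+1}..x_{2n}}.\<close>

definition emp_risk_S2 :: "nat \<Rightarrow> (nat \<Rightarrow> real) \<Rightarrow> real \<Rightarrow> real" where
  "emp_risk_S2 n x \<theta> = (\<Sum>i=1..n. (\<theta> - x i)^2) / real n"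

definition theta_hat_S1 :: "nat \<Rightarrow> (nat \<Rightarrow> real) \<Rightarrow> real" where
  "theta_hat_S1 n x = (\<Sum>i=n+1..2*n. x i) / real n"

definition GUe_offline :: "real \<Rightarrow> nat \<Rightarrow> (nat \<Rightarrow> real) \<Rightarrow> real \<Rightarrow> real" where
  "GUe_offline \<omega> n x \<theta> =
     exp (- \<omega> * real n * (emp_risk_S2 n x (theta_hat_S1 n x) - emp_risk_S2 n x \<theta>))"

definition b_fun :: "real \<Rightarrow> real \<Rightarrow> real \<Rightarrow> real \<Rightarrow> real" where
  "b_fun \<alpha> \<sigma>2 \<omega> z = ln (1 / \<alpha>) / (2 * \<omega> * \<sigma>2 * z) + z / 2"

end

theory Submission
  imports Defs
begin

text \<open>Let \<open>Z\<^sub>1\<close> and \<open>Z\<^sub>2\<close> be the standardized sums of \<open>S\<^sub>2\<close> and \<open>S\<^sub>1\<close>, i.e. the sum over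
  \<open>S\<^sub>k\<close> equals \<open>n \<theta>* + sqrt n \<sigma> Z\<^sub>k\<close>; they are independent standard normals. Expanding the
  empirical risks, the exponent of the GUe-value at \<open>\<theta>*\<close> is exactly \<open>\<omega> \<sigma>\<^sup>2 Z\<^sub>2 (2 Z\<^sub>1 - Z\<^sub>2)\<close>,
  so \<open>G\<^sub>S(\<theta>*) \<ge> 1/\<alpha>\<close> means \<open>Z\<^sub>1 \<ge> b(Z\<^sub>2)\<close> when \<open>Z\<^sub>2 > 0\<close> and \<open>Z\<^sub>1 \<le> b(Z\<^sub>2)\<close> when \<open>Z\<^sub>2 < 0\<close>.
  By Fubini the probability of this region under the standard bivariate normal law is the double
  integral, so the non-coverage probability equals it for every \<open>\<omega>\<close>.\<close>

definition standardized_sum :: "real \<Rightarrow> real \<Rightarrow> nat set \<Rightarrow> (nat \<Rightarrow> real) \<Rightarrow> real" where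
  "standardized_sum \<mu> \<sigma> A x = ((\<Sum>i\<in>A. x i) - real (card A) * \<mu>) / (sqrt (real (card A)) * \<sigma>)"

lemma sum_eq_standardized_sum:
  assumes "\<sigma> \<noteq> 0"
  shows "(\<Sum>i\<in>A. x i) = real (card A) * \<mu> + sqrt (real (card A)) * \<sigma> * standardized_sum \<mu> \<sigma> A x"
proof (cases "card A = 0")
  case True
  then have "(\<Sum>i\<in>A. x i) = 0"
    by (metis card_0_eq sum.empty sum.infinite)
  with True show ?thesis by simp
next
  case False
  with assms show ?thesis by (simp add: standardized_sum_def)
qed

lemma sum_power2_diff:
  fixes x :: "'a \<Rightarrow> real"
  shows "(\<Sum>i\<in>A. (t - x i)^2) = real (card A) * t^2 - 2 * t * (\<Sum>i\<in>A. x i) + (\<Sum>i\<in>A. (x i)^2)"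
  by (simp add: power2_diff sum.distrib sum_subtractf sum_distrib_left)

lemma GUe_offline_standardized:
  fixes x :: "nat \<Rightarrow> real" and n :: nat and \<theta> \<sigma> \<omega> :: real
  assumes "n \<ge> 1" "\<sigma> \<noteq> 0"
  defines "z1 \<equiv> standardized_sum \<theta> \<sigma> {1..n} x" and "z2 \<equiv> standardized_sum \<theta> \<sigma> {n+1..2*n} x"
  shows "GUe_offline \<omega> n x \<theta> = exp (\<omega> * \<sigma>^2 * z2 * (2 * z1 - z2))"
proof -
  have n: "real n > 0" using assms(1) by simp
  define \<tau> where "\<tau> = sqrt (real n) * \<sigma>"
  have \<tau>2: "\<tau>^2 = real n * \<sigma>^2" by (simp add: \<tau>_def power_mult_distrib)
  have sum_S2: "(\<Sum>i=1..n. x i) = real n * \<theta> + \<tau> * z1"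
    using sum_eq_standardized_sum[OF assms(2), of x "{1..n}" \<theta>] by (simp add: z1_def \<tau>_def)
  have sum_S1: "(\<Sum>i=n+1..2*n. x i) = real n * \<theta> + \<tau> * z2"
    using sum_eq_standardized_sum[OF assms(2), of x "{n+1..2*n}" \<theta>] by (simp add: z2_def \<tau>_def)
  define Q where "Q = (\<Sum>i=1..n. (x i)^2)"
  have theta_hat: "theta_hat_S1 n x = \<theta> + \<tau> * z2 / real n"
    unfolding theta_hat_S1_def sum_S1 using n by (simp add: field_simps)
  have risk: "emp_risk_S2 n x t = (real n * t^2 - 2 * t * (real n * \<theta> + \<tau> * z1) + Q) / real n" for t
    unfolding emp_risk_S2_def sum_power2_diff sum_S2 Q_def by simp
  have "- \<omega> * real n * (emp_risk_S2 n x (theta_hat_S1 n x) - emp_risk_S2 n x \<theta>)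
      = - \<omega> * (\<tau>^2 * z2^2 / real n - 2 * \<tau>^2 * z1 * z2 / real n)"
    unfolding risk theta_hat using n by (simp add: field_simps power2_eq_square)
  also have "\<dots> = \<omega> * \<sigma>^2 * z2 * (2 * z1 - z2)"
    unfolding \<tau>2 using n by (simp add: field_simps power2_eq_square)
  finally show ?thesis by (simp add: GUe_offline_def)
qed

lemma le_quadratic_iff_threshold:
  fixes k L y z :: real
  assumes "k > 0" "L > 0"
  shows "L \<le> k * z * (2 * y - z) \<longleftrightarrow>
    (0 < z \<and> L / (2 * k * z) + z / 2 \<le> y) \<or> (z < 0 \<and> y \<le> L / (2 * k * z) + z / 2)"
proof -
  have quadratic: "L \<le> k * z * (2 * y - z) \<longleftrightarrow> L + k * z^2 \<le> y * (2 * k * z)"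
    by (simp add: algebra_simps power2_eq_square)
  have threshold: "L / (2 * k * z) + z / 2 = (L + k * z^2) / (2 * k * z)" if "z \<noteq> 0"
    using that assms by (simp add: field_simps power2_eq_square)
  consider "z < 0" | "z = 0" | "z > 0" by linarith
  then show ?thesis
  proof cases
    case 1
    then have "2 * k * z < 0" using assms by (simp add: mult_pos_neg)
    with 1 show ?thesis by (simp add: quadratic threshold neg_le_divide_eq)
  next
    case 3
    then have "2 * k * z > 0" using assms by simp
    with 3 show ?thesis by (simp add: quadratic threshold pos_divide_le_eq)
  qed (use assms in simp)
qed

lemma one_div_le_GUe_offline_iff:
  fixes x :: "nat \<Rightarrow> real" and n :: nat and \<theta> \<sigma> \<omega> \<alpha> :: real
  assumes "n \<ge> 1" "\<sigma> \<noteq> 0" "\<omega> > 0" "0 < \<alpha>" "\<alpha> < 1"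
  defines "z1 \<equiv> standardized_sum \<theta> \<sigma> {1..n} x" and "z2 \<equiv> standardized_sum \<theta> \<sigma> {n+1..2*n} x"
  shows "1 / \<alpha> \<le> GUe_offline \<omega> n x \<theta> \<longleftrightarrow>
    (z2, z1) \<in> (SIGMA z:{0<..}. {b_fun \<alpha> (\<sigma>^2) \<omega> z..}) \<union> (SIGMA z:{..<0}. {..b_fun \<alpha> (\<sigma>^2) \<omega> z})"
proof -
  have exp_threshold: "1 / \<alpha> \<le> exp t \<longleftrightarrow> ln (1 / \<alpha>) \<le> t" for t
    using assms(4) by (subst exp_le_cancel_iff[symmetric]) simp
  have "1 / \<alpha> \<le> GUe_offline \<omega> n x \<theta> \<longleftrightarrow> ln (1 / \<alpha>) \<le> (\<omega> * \<sigma>^2) * z2 * (2 * z1 - z2)"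
    unfolding GUe_offline_standardized[OF assms(1,2)] z1_def z2_def exp_threshold by (simp add: mult.assoc)
  also have "\<dots> \<longleftrightarrow> (0 < z2 \<and> b_fun \<alpha> (\<sigma>^2) \<omega> z2 \<le> z1) \<or> (z2 < 0 \<and> z1 \<le> b_fun \<alpha> (\<sigma>^2) \<omega> z2)"
    using assms(2-5) by (subst le_quadratic_iff_threshold) (simp_all add: b_fun_def mult.assoc)
  finally show ?thesis by auto
qed

lemma (in prob_space) distributed_standardized_sum:
  assumes "finite A" "A \<noteq> {}" "indep_vars (\<lambda>_. borel) X A" "\<sigma> > 0"
    and "\<And>i. i \<in> A \<Longrightarrow> distributed M lborel (X i) (normal_density \<mu> \<sigma>)"
  shows "distributed M lborel (\<lambda>s. standardized_sum \<mu> \<sigma> A (\<lambda>i. X i s)) std_normal_density"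
proof -
  have pos: "sqrt (real (card A)) * \<sigma> > 0"
    using assms by (simp add: card_gt_0_iff)
  have "distributed M lborel (\<lambda>s. \<Sum>i\<in>A. X i s)
      (normal_density (real (card A) * \<mu>) (sqrt (real (card A)) * \<sigma>))"
    using sum_indep_normal[OF assms(1-3), of "\<lambda>_. \<sigma>" "\<lambda>_. \<mu>"] assms(4,5)
    by (simp add: real_sqrt_mult)
  then show ?thesis
    unfolding normal_standard_normal_convert[OF pos] standardized_sum_def .
qed

lemma (in prob_space) indep_var_standardized_sums:
  assumes "indep_vars (\<lambda>_. borel) X I" "A \<subseteq> I" "B \<subseteq> I" "A \<inter> B = {}" "finite A" "finite B"
  shows "indep_var lborel (\<lambda>s. standardized_sum \<mu> \<sigma> A (\<lambda>i. X i s))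
    lborel (\<lambda>s. standardized_sum \<mu> \<sigma> B (\<lambda>i. X i s))"
proof -
  have "standardized_sum \<mu> \<sigma> C \<in> borel_measurable (PiM C (\<lambda>_. borel))" if "finite C" for C
    unfolding standardized_sum_def using that by measurable
  then have "indep_var lborel (standardized_sum \<mu> \<sigma> A \<circ> (\<lambda>s. restrict (\<lambda>i. X i s) A))
      lborel (standardized_sum \<mu> \<sigma> B \<circ> (\<lambda>s. restrict (\<lambda>i. X i s) B))"
    using assms(5,6) by (intro indep_var_compose[OF indep_var_restrict[OF assms(1,4,2,3)]]) auto
  then show ?thesis
    by (simp add: comp_def standardized_sum_def)
qed

lemma (in prob_space) distributed_indep_std_normal_pair:
  assumes "distributed M lborel Z1 std_normal_density" "distributed M lborel Z2 std_normal_density"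
    and "indep_var lborel Z1 lborel Z2"
  shows "distributed M (lborel \<Otimes>\<^sub>M lborel) (\<lambda>s. (Z1 s, Z2 s))
    (\<lambda>p. ennreal (std_normal_density (fst p) * std_normal_density (snd p)))"
proof -
  have "distributed M (lborel \<Otimes>\<^sub>M lborel) (\<lambda>s. (Z1 s, Z2 s))
      (\<lambda>(x, y). ennreal (std_normal_density x) * ennreal (std_normal_density y))"
    using assms by (intro distributed_joint_indep) (auto intro: lborel.sigma_finite_measure_axioms)
  moreover have "(\<lambda>p. ennreal (std_normal_density (fst p) * std_normal_density (snd p)))
      = (\<lambda>(x, y). ennreal (std_normal_density x) * ennreal (std_normal_density y))"
    by (auto simp: ennreal_mult normal_density_nonneg)
  ultimately show ?thesis by (simp only:)
qed

lemma (in prob_space)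
  assumes "distributed M N X (\<lambda>x. ennreal (f x))" "\<And>x. x \<in> space N \<Longrightarrow> 0 \<le> f x" "A \<in> sets N"
  shows set_integrable_distributed: "set_integrable N A f"
    and prob_distributed_eq_set_integral: "prob {s \<in> space M. X s \<in> A} = (LINT x:A|N. f x)"
proof -
  have X: "X \<in> measurable M N"
    using assms(1) by (rule distributed_measurable)
  have "integrable M (\<lambda>s. indicator A (X s) :: real)"
    using X assms(3) by (intro integrable_const_bound[where B=1]) (auto simp: indicator_def)
  then show "set_integrable N A f"
    using distributed_integrable[OF assms(1), of "indicator A"] assms
    unfolding set_integrable_def by (simp add: mult.commute)
  have "(LINT x:A|N. f x) = (\<integral>s. indicator A (X s) \<partial>M)"
    using distributed_integral[OF assms(1), of "indicator A"] assms
    unfolding set_lebesgue_integral_def by (simp add: mult.commute)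
  also have "\<dots> = (\<integral>s. indicator {s \<in> space M. X s \<in> A} s \<partial>M)"
    by (intro Bochner_Integration.integral_cong) (auto simp: indicator_def)
  also have "\<dots> = prob {s \<in> space M. X s \<in> A}"
    using measurable_sets[OF X assms(3)] by (simp add: vimage_def Int_def conj_commute)
  finally show "prob {s \<in> space M. X s \<in> A} = (LINT x:A|N. f x)" ..
qed

lemma sets_Sigma_threshold:
  fixes b :: "real \<Rightarrow> real"
  assumes [measurable]: "b \<in> borel_measurable borel"
  shows "(SIGMA x:{0<..}. {b x..}) \<in> sets (lborel \<Otimes>\<^sub>M lborel)"
    and "(SIGMA x:{..<0}. {..b x}) \<in> sets (lborel \<Otimes>\<^sub>M lborel)"
proof -
  have "(SIGMA x:{0<..}. {b x..}) = {p \<in> space (lborel \<Otimes>\<^sub>M lborel). 0 < fst p \<and> b (fst p) \<le> snd p}"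
    and "(SIGMA x:{..<0}. {..b x}) = {p \<in> space (lborel \<Otimes>\<^sub>M lborel). fst p < 0 \<and> snd p \<le> b (fst p)}"
    by (auto simp: space_pair_measure)
  then show "(SIGMA x:{0<..}. {b x..}) \<in> sets (lborel \<Otimes>\<^sub>M lborel)"
    and "(SIGMA x:{..<0}. {..b x}) \<in> sets (lborel \<Otimes>\<^sub>M lborel)"
    by (simp_all only:) measurable
qed

lemma (in pair_sigma_finite) set_integral_Sigma:
  fixes f :: "_ \<Rightarrow> _::{banach, second_countable_topology}"
  assumes "set_integrable (M1 \<Otimes>\<^sub>M M2) (SIGMA x:A. B x) f"
  shows "(LINT x:A|M1. LINT y:B x|M2. f (x, y)) = (LINT p:(SIGMA x:A. B x)|M1 \<Otimes>\<^sub>M M2. f p)"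
proof -
  have "indicator A x *\<^sub>R (LINT y:B x|M2. f (x, y))
      = (\<integral>y. indicator (SIGMA x:A. B x) (x, y) *\<^sub>R f (x, y) \<partial>M2)" for x
    unfolding set_lebesgue_integral_def by (cases "x \<in> A") (simp_all add: indicator_def)
  then show ?thesis
    using integral_fst'[OF assms[unfolded set_integrable_def]]
    unfolding set_lebesgue_integral_def[of M1] set_lebesgue_integral_def[of "M1 \<Otimes>\<^sub>M M2"] by simp
qed

lemma std_normal_density_mult:
  "std_normal_density x * std_normal_density y = exp (- (y^2 + x^2) / 2) / (2 * pi)"
  unfolding std_normal_density_def
  by (simp add: mult_exp_exp real_sqrt_mult[symmetric] add_divide_distrib)

lemma (in prob_space) prob_indep_std_normal_pair_Sigma:
  assumes "distributed M lborel Z1 std_normal_density" "distributed M lborel Z2 std_normal_density"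
    and "indep_var lborel Z1 lborel Z2" and "b \<in> borel_measurable borel"
  shows "prob {s \<in> space M. (Z1 s, Z2 s) \<in> (SIGMA x:{0<..}. {b x..}) \<union> (SIGMA x:{..<0}. {..b x})}
    = (LINT x:{0<..}|lborel. LINT y:{b x..}|lborel. exp (- (y^2 + x^2) / 2) / (2 * pi))
      + (LINT x:{..<0}|lborel. LINT y:{..b x}|lborel. exp (- (y^2 + x^2) / 2) / (2 * pi))"
proof -
  define \<phi>2 where "\<phi>2 p = std_normal_density (fst p) * std_normal_density (snd p)" for p :: "real \<times> real"
  have joint: "distributed M (lborel \<Otimes>\<^sub>M lborel) (\<lambda>s. (Z1 s, Z2 s)) (\<lambda>p. ennreal (\<phi>2 p))"
    unfolding \<phi>2_def using assms(1-3) by (rule distributed_indep_std_normal_pair)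
  have \<phi>2_nonneg: "0 \<le> \<phi>2 p" for p
    by (simp add: \<phi>2_def normal_density_nonneg)
  note sets = sets_Sigma_threshold[OF assms(4)]
  have integrable: "set_integrable (lborel \<Otimes>\<^sub>M lborel) R \<phi>2" if "R \<in> sets (lborel \<Otimes>\<^sub>M lborel)" for R
    using joint \<phi>2_nonneg that by (rule set_integrable_distributed)
  have "prob {s \<in> space M. (Z1 s, Z2 s) \<in> (SIGMA x:{0<..}. {b x..}) \<union> (SIGMA x:{..<0}. {..b x})}
      = (LINT p:(SIGMA x:{0<..}. {b x..}) \<union> (SIGMA x:{..<0}. {..b x})|lborel \<Otimes>\<^sub>M lborel. \<phi>2 p)"
    using joint \<phi>2_nonneg sets by (intro prob_distributed_eq_set_integral) auto
  also have "\<dots> = (LINT p:(SIGMA x:{0<..}. {b x..})|lborel \<Otimes>\<^sub>M lborel. \<phi>2 p)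
      + (LINT p:(SIGMA x:{..<0}. {..b x})|lborel \<Otimes>\<^sub>M lborel. \<phi>2 p)"
    using sets by (intro set_integral_Un integrable) auto
  also have "\<dots> = (LINT x:{0<..}|lborel. LINT y:{b x..}|lborel. \<phi>2 (x, y))
      + (LINT x:{..<0}|lborel. LINT y:{..b x}|lborel. \<phi>2 (x, y))"
    using lborel_pair.set_integral_Sigma[OF integrable[OF sets(1)]]
      lborel_pair.set_integral_Sigma[OF integrable[OF sets(2)]] by simp
  finally show ?thesis
    by (simp add: \<phi>2_def std_normal_density_mult)
qed

theorem proposition1:
  fixes M :: "'a measure" and X :: "nat \<Rightarrow> 'a \<Rightarrow> real"
    and n :: nat and \<theta>s \<sigma> \<omega> \<alpha> :: real
  assumes "prob_space M"
    and "n \<ge> 1"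
    and "\<sigma> > 0"
    and "\<omega> > 0"
    and "0 < \<alpha>" and "\<alpha> < 1"
    and "prob_space.indep_vars M (\<lambda>_. borel) X {1..2*n}"
    and "\<And>i. i \<in> {1..2*n} \<Longrightarrow> distributed M lborel (X i) (normal_density \<theta>s \<sigma>)"
  shows "measure M {s \<in> space M. GUe_offline \<omega> n (\<lambda>i. X i s) \<theta>s \<ge> 1 / \<alpha>} = \<alpha>
    \<longleftrightarrow>
    (LINT z2:{0<..}|lborel. (LINT z1:{b_fun \<alpha> (\<sigma>^2) \<omega> z2..}|lborel.
        exp (- (z1^2 + z2^2) / 2) / (2 * pi)))
    + (LINT z2:{..<0}|lborel. (LINT z1:{..b_fun \<alpha> (\<sigma>^2) \<omega> z2}|lborel.
        exp (- (z1^2 + z2^2) / 2) / (2 * pi))) = \<alpha>"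
proof -
  interpret prob_space M by fact
  define Z1 where "Z1 s = standardized_sum \<theta>s \<sigma> {1..n} (\<lambda>i. X i s)" for s
  define Z2 where "Z2 s = standardized_sum \<theta>s \<sigma> {n+1..2*n} (\<lambda>i. X i s)" for s
  have normal: "distributed M lborel Z1 std_normal_density" "distributed M lborel Z2 std_normal_density"
    unfolding Z1_def Z2_def using assms(2,3,8)
    by (auto intro!: distributed_standardized_sum indep_vars_subset[OF assms(7)])
  have indep: "indep_var lborel Z2 lborel Z1"
    unfolding Z1_def Z2_def by (rule indep_var_standardized_sums[OF assms(7)]) auto
  have b_measurable: "b_fun \<alpha> (\<sigma>^2) \<omega> \<in> borel_measurable borel"
    unfolding b_fun_def[abs_def] by measurable
  have "1 / \<alpha> \<le> GUe_offline \<omega> n (\<lambda>i. X i s) \<theta>s \<longleftrightarrow> (Z2 s, Z1 s) \<in>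
      (SIGMA z:{0<..}. {b_fun \<alpha> (\<sigma>^2) \<omega> z..}) \<union> (SIGMA z:{..<0}. {..b_fun \<alpha> (\<sigma>^2) \<omega> z})" for s
    unfolding Z1_def Z2_def using assms(2-6) by (intro one_div_le_GUe_offline_iff) auto
  then have "measure M {s \<in> space M. GUe_offline \<omega> n (\<lambda>i. X i s) \<theta>s \<ge> 1 / \<alpha>} = prob {s \<in> space M.
      (Z2 s, Z1 s) \<in> (SIGMA z:{0<..}. {b_fun \<alpha> (\<sigma>^2) \<omega> z..}) \<union> (SIGMA z:{..<0}. {..b_fun \<alpha> (\<sigma>^2) \<omega> z})}"
    by simp
  also have "\<dots> = (LINT z2:{0<..}|lborel. LINT z1:{b_fun \<alpha> (\<sigma>^2) \<omega> z2..}|lborel. exp (- (z1^2 + z2^2) / 2) / (2 * pi))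
      + (LINT z2:{..<0}|lborel. LINT z1:{..b_fun \<alpha> (\<sigma>^2) \<omega> z2}|lborel. exp (- (z1^2 + z2^2) / 2) / (2 * pi))"
    by (rule prob_indep_std_normal_pair_Sigma[OF normal(2,1) indep b_measurable])
  finally show ?thesis by simp
qed

end
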